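(* Let $\mathcal{F}$ be a complete polyhedral fan in $\mathbb{R}^d$, i.e. a collection of relatively open pointed polyhedral cones with apex at the origin, covering $\mathbb{R}^d$, such that for any two cones $C,C'$ the closure of $C\cap C'$... more precisely such that the closures of any two cones meet in a common face of both. Let $\mathcal{L}$ be the poset of nonzero cones of $\mathcal{F}$ (ordered by the face relation), and let $\mathcal{L}'\subseteq\mathcal{L}$ be the subposet of cones contained in $U^+\cup U^-$, where $U^+,U^-$ are two nonempty convex (not necessarily closed) sets, each a union of cones of $\mathcal{F}$. Assume there is a linear functional $f$ on $\mathbb{R}^d$ with $f(x)>0$ for all $x\in U^+$ and $f(x)<0$ for all $x\in U^-$. Then $\mathcal{L}-\mathcal{L}'$ is homotopy equivalent to a $(d-2)$-sphere.
   Context: The topology of a poset is that of the geometric realization of its order complex (the simplicial complex of its chains). *)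

theory Defs
  imports "HOL-Analysis.Analysis"
begin

definition pointed_polyhedral_cone :: "'a::euclidean_space set \<Rightarrow> bool" where
  "pointed_polyhedral_cone K \<longleftrightarrow>
     polyhedron K \<and> cone K \<and> K \<noteq> {} \<and> (\<forall>x\<in>K. - x \<in> K \<longrightarrow> x = 0)"

definition complete_fan :: "'a::euclidean_space set set \<Rightarrow> bool" where
  "complete_fan F \<longleftrightarrow>
     finite F \<and>
     (\<forall>C\<in>F. \<exists>K. pointed_polyhedral_cone K \<and> C = rel_interior K) \<and>
     \<Union>F = UNIV \<and>
     (\<forall>C\<in>F. \<forall>C'\<in>F. (closure C \<inter> closure C') face_of closure C \<and>
                      (closure C \<inter> closure C') face_of closure C')"

definition fan_le :: "'a::euclidean_space set \<Rightarrow> 'a set \<Rightarrow> bool" where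
  "fan_le C C' \<longleftrightarrow> closure C face_of closure C'"

text \<open>Geometric realization of the order complex (simplicial complex of chains) of a
  finite poset with carrier P and order le: the points are the convex combinations
  (barycentric coordinates) supported on chains, with the topology inherited from the
  product topology on functions into the reals.\<close>
definition order_complex_realization :: "'b set \<Rightarrow> ('b \<Rightarrow> 'b \<Rightarrow> bool) \<Rightarrow> ('b \<Rightarrow> real) topology" where
  "order_complex_realization P le =
     subtopology (powertop_real UNIV)
       {t. (\<forall>x. 0 \<le> t x) \<and> (\<forall>x. x \<notin> P \<longrightarrow> t x = 0) \<and> sum t P = 1 \<and>
           (\<forall>x y. 0 < t x \<and> 0 < t y \<longrightarrow> le x y \<or> le y x)}"

text \<open>The (d-2)-sphere, realized as the equator of the unit sphere of a d-dimensional
  Euclidean space (empty when d = 1).\<close>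
definition codim2_sphere :: "'a::euclidean_space itself \<Rightarrow> 'a topology" where
  "codim2_sphere _ = top_of_set {x::'a. x \<in> sphere 0 1 \<and> x \<bullet> (SOME b. b \<in> (Basis::'a set)) = 0}"

end

theory Submission
  imports Defs
begin

(* Choose a point v_C in every nonzero cone C of the fan.  A point t of the realization of the
   order complex of L is a weighting of a chain C_1 < ... < C_k, and the vector
   sum_C t(C) v_C lies in the top cone C_k: v_{C_k} lies in the relatively open cone C_k and
   everything else in its closure.  Conversely a point of C splits uniquely as a positive multiple
   of v_C plus a point on the relative boundary of C, which lies in a strictly smaller cone; by
   induction this makes t |-> sgn (sum_C t(C) v_C) a bijection, hence (by compactness) a
   homeomorphism, from the realization of L onto the unit sphere.
   Since U+ and U- are unions of cones, this homeomorphism maps the points t whose top cone lies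
   in L - L' onto the sphere minus U+ and U-; that part of the realization deformation retracts
   onto the realization of L - L' by linear interpolation between t and its normalised
   restriction to L - L'.  Finally, for p in U+ and q in U-, pushing x along p or q (according to
   the sign of f x) onto the hyperplane f = 0 never enters U+, U- or 0, as these sets are closed
   under addition and positive scaling; after normalisation this deformation retracts the sphere
   minus U+ and U- onto the great sphere of the hyperplane f = 0, a (d-2)-sphere. *)

section \<open>Closed convex pointed cones\<close>

lemma rel_interior_cone_scaleR:
  fixes K :: "'a::euclidean_space set"
  assumes "cone K" "x \<in> rel_interior K" "0 < c"
  shows "c *\<^sub>R x \<in> rel_interior K"
proof -
  have "K \<noteq> {}" using assms(2) rel_interior_subset by blast
  then have "(*\<^sub>R) c ` K = K" using cone_iff[of K] assms(1,3) by blast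
  moreover have "c *\<^sub>R x \<in> (*\<^sub>R) c ` rel_interior K" using assms(2) by blast
  ultimately show ?thesis using rel_interior_scaleR[of c K] assms(3) by simp
qed

lemma rel_interior_convex_cone_add:
  fixes K :: "'a::euclidean_space set"
  assumes "convex K" "cone K" "x \<in> rel_interior K" "y \<in> K"
  shows "x + y \<in> rel_interior K"
proof -
  have "x + y = 2 *\<^sub>R (y - (1/2) *\<^sub>R (y - x))"
    by (simp add: scaleR_right_diff_distrib scaleR_2)
  also have "\<dots> \<in> rel_interior K"
    using rel_interior_convex_shrink[OF assms(1,3,4), of "1/2"]
    by (intro rel_interior_cone_scaleR[OF assms(2)]) simp_all
  finally show ?thesis .
qed

lemma pointed_cone_eq_0_if_0_in_rel_interior:
  fixes K :: "'a::euclidean_space set"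
  assumes "convex K" "cone K" "\<forall>x\<in>K. - x \<in> K \<longrightarrow> x = 0" "0 \<in> rel_interior K"
  shows "K = {0}"
proof -
  have "z = 0" if z: "z \<in> K" for z
  proof -
    have "z \<in> affine hull K" using z by (rule hull_inc)
    then obtain e where e: "e > 1" "(1 - e) *\<^sub>R z + e *\<^sub>R 0 \<in> K"
      using convex_rel_interior_if2[OF assms(1,4)] by blast
    then have "(1 - e) *\<^sub>R z \<in> K" by simp
    then have "(1 / (e - 1)) *\<^sub>R ((1 - e) *\<^sub>R z) \<in> K"
      by (rule mem_cone[OF assms(2)]) (use e(1) in simp)
    moreover have "(1 / (e - 1)) * (1 - e) = - 1"
      using e(1) by (simp add: field_simps)
    ultimately have "- z \<in> K" by simp
    then show "z = 0" using assms(3) z by blast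
  qed
  moreover have "0 \<in> K" using assms(4) rel_interior_subset by blast
  ultimately show ?thesis by blast
qed

lemma convex_cone_rel_frontier_decomposition_unique:
  fixes K :: "'a::euclidean_space set"
  assumes "convex K" "cone K" "v \<in> rel_interior K"
    and "y \<in> K - rel_interior K" "y' \<in> K - rel_interior K"
    and "a *\<^sub>R v + y = a' *\<^sub>R v + y'"
  shows "a = a'"
proof -
  have shift: "b *\<^sub>R v + z \<in> rel_interior K" if "0 < b" "z \<in> K" for b z
    using rel_interior_convex_cone_add[OF assms(1,2) rel_interior_cone_scaleR[OF assms(2,3)]] that
    by blast
  have not_less: "\<not> b < b'"
    if "z = (b' - b) *\<^sub>R v + z'" "z \<in> K - rel_interior K" "z' \<in> K - rel_interior K" for b b' z z'
  proof
    assume "b < b'"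
    then have "(b' - b) *\<^sub>R v + z' \<in> rel_interior K" using shift that(3) by simp
    then show False using that(1,2) by simp
  qed
  have "y = (a' - a) *\<^sub>R v + y'" "y' = (a - a') *\<^sub>R v + y"
    using assms(6) by (simp_all add: algebra_simps)
  then have "\<not> a < a'" "\<not> a' < a"
    using not_less assms(4,5) by blast+
  then show ?thesis by simp
qed

lemma bounded_ray_in_pointed_cone:
  fixes K :: "'a::euclidean_space set"
  assumes "closed K" "cone K" "- v \<notin> K"
  shows "bounded {l. 0 \<le> l \<and> x - l *\<^sub>R v \<in> K}"
proof -
  obtain e where e: "e > 0" "ball (- v) e \<subseteq> - K"
    using assms(1,3) open_contains_ball[of "- K"] by blast
  have "l \<le> norm x / e" if l: "0 \<le> l" "x - l *\<^sub>R v \<in> K" for l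
  proof (rule ccontr)
    assume "\<not> l \<le> norm x / e"
    then have gt: "norm x / e < l" by simp
    moreover have "0 \<le> norm x / e" using e(1) by simp
    ultimately have "l > 0" by linarith
    have "(1/l) *\<^sub>R (x - l *\<^sub>R v) \<in> K"
      by (rule mem_cone[OF assms(2) l(2)]) (use \<open>l > 0\<close> in simp)
    moreover have "(1/l) *\<^sub>R (x - l *\<^sub>R v) = (1/l) *\<^sub>R x - v"
      using \<open>l > 0\<close> by (simp add: algebra_simps)
    moreover have "dist (- v) ((1/l) *\<^sub>R x - v) < e"
      using gt \<open>l > 0\<close> e(1) by (simp add: dist_norm field_simps)
    ultimately show False using e(2) by auto
  qed
  then show ?thesis by (intro boundedI[where B = "norm x / e"]) auto
qed

lemma pointed_cone_ray_leaves_rel_interior: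
  fixes K :: "'a::euclidean_space set"
  assumes "closed K" "convex K" "cone K" "\<forall>x\<in>K. - x \<in> K \<longrightarrow> x = 0"
    and "v \<in> K" "v \<noteq> 0" "x \<in> K"
  obtains l where "0 \<le> l" "x - l *\<^sub>R v \<in> K - rel_interior K"
proof -
  define Lam where "Lam = {l. 0 \<le> l \<and> x - l *\<^sub>R v \<in> K}"
  have "Lam = {0..} \<inter> (\<lambda>l. x - l *\<^sub>R v) -` K" unfolding Lam_def by auto
  moreover have "closed ((\<lambda>l. x - l *\<^sub>R v) -` K)"
    by (intro continuous_closed_vimage assms(1) continuous_intros)
  ultimately have "closed Lam" by (simp add: closed_Int)
  moreover have "- v \<notin> K" using assms(4-6) by auto
  then have "bounded Lam"
    unfolding Lam_def by (intro bounded_ray_in_pointed_cone assms(1,3))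
  moreover have "0 \<in> Lam" using assms(7) unfolding Lam_def by simp
  ultimately obtain l where l: "l \<in> Lam" "\<forall>l'\<in>Lam. l' \<le> l"
    using compact_attains_sup[of Lam] compact_eq_bounded_closed by blast
  have "x - l *\<^sub>R v \<notin> rel_interior K"
  proof
    assume ri: "x - l *\<^sub>R v \<in> rel_interior K"
    have "convex_cone K"
      using assms(2,3,5) unfolding convex_cone_def conic_def cone_def by blast
    then have "x - l *\<^sub>R v + v \<in> K"
      using l(1) assms(5) convex_cone_add unfolding Lam_def by blast
    then have "x - l *\<^sub>R v + v \<in> affine hull K" by (rule hull_inc)
    then obtain e where "e > 1" "(1 - e) *\<^sub>R (x - l *\<^sub>R v + v) + e *\<^sub>R (x - l *\<^sub>R v) \<in> K"
      using convex_rel_interior_if2[OF assms(2) ri] by blast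
    moreover have "(1 - e) *\<^sub>R (x - l *\<^sub>R v + v) + e *\<^sub>R (x - l *\<^sub>R v) = x - (l + (e - 1)) *\<^sub>R v"
      by (simp add: algebra_simps)
    ultimately have "l + (e - 1) \<in> Lam" using l(1) unfolding Lam_def by simp
    then show False using l(2) \<open>e > 1\<close> by fastforce
  qed
  then show thesis using that l(1) unfolding Lam_def by blast
qed

lemma convex_cone_sum_mem:
  assumes "convex_cone K" "finite I" "\<And>i. i \<in> I \<Longrightarrow> g i \<in> K"
  shows "sum g I \<in> K"
  using assms(2,3)
proof (induction I rule: finite_induct)
  case empty
  then show ?case using convex_cone_contains_0[OF assms(1)] by simp
next
  case (insert i I)
  then show ?case using convex_cone_add[OF assms(1)] by simp
qed


section \<open>Realizations of order complexes\<close>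

definition chain_weights :: "'b set \<Rightarrow> ('b \<Rightarrow> 'b \<Rightarrow> bool) \<Rightarrow> ('b \<Rightarrow> real) set" where
  "chain_weights P le =
     {t. (\<forall>x. 0 \<le> t x) \<and> (\<forall>x. x \<notin> P \<longrightarrow> t x = 0) \<and>
         (\<forall>x y. 0 < t x \<and> 0 < t y \<longrightarrow> le x y \<or> le y x)}"

definition is_chain_top :: "('b \<Rightarrow> 'b \<Rightarrow> bool) \<Rightarrow> ('b \<Rightarrow> real) \<Rightarrow> 'b \<Rightarrow> bool" where
  "is_chain_top le t C \<longleftrightarrow> 0 < t C \<and> (\<forall>D. 0 < t D \<longrightarrow> le D C)"

lemma order_complex_realization_eq:
  "order_complex_realization P le =
     subtopology (powertop_real UNIV) {t \<in> chain_weights P le. sum t P = 1}"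
proof -
  have "{t. (\<forall>x. 0 \<le> t x) \<and> (\<forall>x. x \<notin> P \<longrightarrow> t x = 0) \<and> sum t P = 1 \<and>
            (\<forall>x y. 0 < t x \<and> 0 < t y \<longrightarrow> le x y \<or> le y x)} =
        {t \<in> chain_weights P le. sum t P = 1}"
    unfolding chain_weights_def by blast
  then show ?thesis unfolding order_complex_realization_def by simp
qed

lemma topspace_order_complex_realization:
  "topspace (order_complex_realization P le) = {t \<in> chain_weights P le. sum t P = 1}"
  by (simp add: order_complex_realization_eq)

lemma chain_weights_not_pos:
  assumes "t \<in> chain_weights P le" "\<not> 0 < t x"
  shows "t x = 0"
proof -
  have "0 \<le> t x" using assms(1) unfolding chain_weights_def by blast
  then show ?thesis using assms(2) by simp
qed

lemma chain_weights_scale: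
  "t \<in> chain_weights P le \<Longrightarrow> 0 < k \<Longrightarrow> (\<lambda>x. k * t x) \<in> chain_weights P le"
  unfolding chain_weights_def by (auto simp: zero_less_mult_iff)

lemma chain_weights_upd_top:
  assumes "t \<in> chain_weights P le" "\<forall>D. 0 < t D \<longrightarrow> le D C" "C \<in> P" "le C C" "0 \<le> a"
  shows "t(C := a) \<in> chain_weights P le"
  using assms unfolding chain_weights_def by auto

lemma finite_chain_has_greatest:
  assumes "finite A" "A \<noteq> {}" "\<forall>x\<in>A. \<forall>y\<in>A. le x y \<or> le y x"
    and "transp le"
  shows "\<exists>m\<in>A. \<forall>x\<in>A. le x m"
  using assms(1-3)
proof (induction A rule: finite_ne_induct)
  case (singleton x)
  then show ?case by blast
next
  case (insert x A)
  then obtain m where m: "m \<in> A" "\<forall>y\<in>A. le y m" by blast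
  show ?case
  proof (cases "le m x")
    case True
    then have "\<forall>y\<in>insert x A. le y x" using m insert.prems transpD[OF assms(4)] by blast
    then show ?thesis by blast
  next
    case False
    then have "le x m" using insert.prems m(1) by blast
    then show ?thesis using m by blast
  qed
qed

lemma chain_weights_has_top:
  assumes "finite P" "transp le" "t \<in> chain_weights P le" "t \<noteq> (\<lambda>_. 0)"
  obtains C where "is_chain_top le t C"
proof -
  let ?S = "{x \<in> P. 0 < t x}"
  have t: "\<forall>x. 0 \<le> t x" "\<forall>x. x \<notin> P \<longrightarrow> t x = 0"
    "\<forall>x y. 0 < t x \<and> 0 < t y \<longrightarrow> le x y \<or> le y x"
    using assms(3) unfolding chain_weights_def by blast+
  obtain x where "t x \<noteq> 0" using assms(4) unfolding fun_eq_iff by blast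
  then have "x \<in> ?S" using t(1,2) by (auto simp: order_less_le)
  then have "\<exists>C\<in>?S. \<forall>D\<in>?S. le D C"
    by (intro finite_chain_has_greatest[OF _ _ _ assms(2)]) (use assms(1) t(3) in auto)
  then obtain C where "C \<in> ?S" "\<forall>D\<in>?S. le D C" by blast
  then have "is_chain_top le t C" using t(2) unfolding is_chain_top_def by force
  then show thesis by (rule that)
qed

lemma closedin_powertop_real_Collect_all:
  assumes "\<And>i. i \<in> I \<Longrightarrow> continuous_map (powertop_real UNIV) euclideanreal (g i)"
    and "\<And>i. i \<in> I \<Longrightarrow> closed (S i)"
  shows "closedin (powertop_real UNIV) {t. \<forall>i\<in>I. g i t \<in> S i}"
proof (cases "I = {}")
  case True
  then show ?thesis using closedin_topspace[of "powertop_real UNIV"] by simp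
next
  case False
  have "{t. \<forall>i\<in>I. g i t \<in> S i} = (\<Inter>i\<in>I. {t \<in> topspace (powertop_real UNIV). g i t \<in> S i})"
    using False by auto
  also have "closedin (powertop_real UNIV) \<dots>"
    using False assms by (intro closedin_INT closedin_continuous_map_preimage) auto
  finally show ?thesis .
qed

lemma compact_space_order_complex_realization:
  assumes "finite P"
  shows "compact_space (order_complex_realization P le)"
proof -
  let ?T = "{t \<in> chain_weights P le. sum t P = 1}"
  let ?NC = "{p. \<not> (le (fst p) (snd p) \<or> le (snd p) (fst p))}"
  let ?R = "{t. \<forall>x\<in>UNIV. t x \<in> (if x \<in> P then {0..} else {0})} \<inter>
      {t \<in> topspace (powertop_real UNIV). sum t P \<in> {1}} \<inter>
      {t. \<forall>p\<in>?NC. min (t (fst p)) (t (snd p)) \<in> {..0}}"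
  have proj: "continuous_map (powertop_real UNIV) euclideanreal (\<lambda>t. t x)" for x
    by (rule continuous_map_product_projection) simp
  have nonneg: "(\<forall>x\<in>UNIV. t x \<in> (if x \<in> P then {0..} else {0})) \<longleftrightarrow>
      (\<forall>x. 0 \<le> t x) \<and> (\<forall>x. x \<notin> P \<longrightarrow> t x = 0)" for t :: "'a \<Rightarrow> real"
    by (metis UNIV_I atLeast_iff order_refl singletonD singletonI)
  have chain: "(\<forall>p\<in>?NC. min (t (fst p)) (t (snd p)) \<in> {..0}) \<longleftrightarrow>
      (\<forall>x y. 0 < t x \<and> 0 < t y \<longrightarrow> le x y \<or> le y x)" for t :: "'a \<Rightarrow> real"
    by (simp add: min_le_iff_disj) (meson not_less)
  have "t \<in> ?T \<longleftrightarrow> t \<in> ?R" for t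
    unfolding chain_weights_def using nonneg[of t] chain[of t] by auto
  then have "?T = ?R" by blast
  also have "closedin (powertop_real UNIV) ?R"
    by (intro closedin_Int closedin_powertop_real_Collect_all[where g = "\<lambda>x t. t x"]
        closedin_powertop_real_Collect_all[where g = "\<lambda>p t. min (t (fst p)) (t (snd p))"]
        closedin_continuous_map_preimage[where Y = euclideanreal] continuous_intros proj assms)
       (auto simp flip: closed_closedin)
  finally have closed: "closedin (powertop_real UNIV) ?T" .
  have sub: "?T \<subseteq> PiE UNIV (\<lambda>x. if x \<in> P then {0..1} else {0})"
  proof
    fix t assume t: "t \<in> ?T"
    have "t x \<le> 1" if "x \<in> P" for x
      using t that member_le_sum[of x P t] assms unfolding chain_weights_def by auto
    then show "t \<in> PiE UNIV (\<lambda>x. if x \<in> P then {0..1} else {0})"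
      using t unfolding chain_weights_def by auto
  qed
  have compact: "compactin (powertop_real UNIV) (PiE UNIV (\<lambda>x. if x \<in> P then {0..1::real} else {0}))"
    by (simp add: compactin_PiE)
  show ?thesis unfolding order_complex_realization_eq
    by (rule compact_space_subtopology[OF closed_compactin[OF compact sub closed]])
qed

lemma continuous_map_into_order_complex_realization:
  "continuous_map X (order_complex_realization P le) g \<longleftrightarrow>
     continuous_map X (powertop_real UNIV) g \<and> g ` topspace X \<subseteq> topspace (order_complex_realization P le)"
  by (simp add: order_complex_realization_eq continuous_map_in_subtopology image_subset_iff Pi_iff)

lemma continuous_map_scaleR [continuous_intros]:
  fixes g :: "'a \<Rightarrow> 'b::real_normed_vector"
  shows "continuous_map X euclideanreal f \<Longrightarrow> continuous_map X euclidean g \<Longrightarrow>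
    continuous_map X euclidean (\<lambda>x. f x *\<^sub>R g x)"
  by (simp add: continuous_map_atin tendsto_scaleR)

lemma continuous_map_sgn:
  fixes f :: "'a \<Rightarrow> 'b::real_normed_vector"
  assumes "continuous_map X euclidean f" "\<And>x. x \<in> topspace X \<Longrightarrow> f x \<noteq> 0"
  shows "continuous_map X euclidean (\<lambda>x. sgn (f x))"
  using assms by (simp add: continuous_map_atin tendsto_sgn)

lemma continuous_map_powertop_real_interpolation:
  assumes "continuous_map X (powertop_real UNIV) u" "continuous_map X (powertop_real UNIV) v"
  shows "continuous_map (prod_topology (top_of_set {0..1::real}) X) (powertop_real UNIV)
           (\<lambda>p x. (1 - fst p) * u (snd p) x + fst p * v (snd p) x)"
  unfolding continuous_map_componentwise_UNIV
proof
  fix x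
  let ?Z = "prod_topology (top_of_set {0..1::real}) X"
  have "continuous_map X euclideanreal (\<lambda>t. u t x)" "continuous_map X euclideanreal (\<lambda>t. v t x)"
    using assms unfolding continuous_map_componentwise_UNIV by blast+
  moreover have "continuous_map ?Z euclideanreal fst"
    by (metis continuous_map_compose continuous_map_fst continuous_map_from_subtopology
        continuous_map_id id_comp)
  ultimately show "continuous_map ?Z euclideanreal (\<lambda>p. (1 - fst p) * u (snd p) x + fst p * v (snd p) x)"
    using continuous_map_compose[OF continuous_map_snd]
    by (intro continuous_map_add continuous_map_real_mult continuous_map_diff
        continuous_map_const[THEN iffD2]) (auto simp: o_def)
qed

lemma chain_weights_mono: "P \<subseteq> L \<Longrightarrow> chain_weights P le \<subseteq> chain_weights L le"
  unfolding chain_weights_def by blast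

lemma chain_weights_convex_combination:
  assumes "t \<in> chain_weights P le" "u \<in> chain_weights P le" "\<forall>x. 0 < u x \<longrightarrow> 0 < t x"
    and "0 \<le> s" "s \<le> 1"
  shows "\<forall>x. 0 < (1 - s) * u x + s * t x \<longrightarrow> 0 < t x"
    and "(\<lambda>x. (1 - s) * u x + s * t x) \<in> chain_weights P le"
proof -
  have t: "\<forall>x. 0 \<le> t x" "\<forall>x. x \<notin> P \<longrightarrow> t x = 0"
    "\<forall>x y. 0 < t x \<and> 0 < t y \<longrightarrow> le x y \<or> le y x"
    using assms(1) unfolding chain_weights_def by blast+
  have u: "\<forall>x. 0 \<le> u x" "\<forall>x. x \<notin> P \<longrightarrow> u x = 0"
    using assms(2) unfolding chain_weights_def by blast+
  show supp: "\<forall>x. 0 < (1 - s) * u x + s * t x \<longrightarrow> 0 < t x"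
  proof (intro allI impI)
    fix x assume pos: "0 < (1 - s) * u x + s * t x"
    show "0 < t x"
    proof (rule ccontr)
      assume "\<not> 0 < t x"
      then have "t x = 0" "u x = 0" using t(1) u(1) assms(3) by (metis order_less_le)+
      then show False using pos by simp
    qed
  qed
  have "0 \<le> (1 - s) * u x + s * t x" for x
    using t(1) u(1) assms(4,5) by (simp add: add_nonneg_nonneg mult_nonneg_nonneg)
  then show "(\<lambda>x. (1 - s) * u x + s * t x) \<in> chain_weights P le"
    unfolding chain_weights_def using t(2,3) u(2) supp by auto
qed

lemma chain_top_sum_pos:
  assumes "t \<in> chain_weights L le" "finite P" "C \<in> P" "is_chain_top le t C"
  shows "0 < sum t P"
proof -
  have "t C \<le> sum t P"
    using assms(1-3) unfolding chain_weights_def by (intro member_le_sum) auto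
  then show ?thesis using assms(4) unfolding is_chain_top_def by linarith
qed

definition normalized_restriction :: "'b set \<Rightarrow> ('b \<Rightarrow> real) \<Rightarrow> 'b \<Rightarrow> real" where
  "normalized_restriction P t x = (if x \<in> P then t x / sum t P else 0)"

lemma normalized_restriction_in_realization:
  assumes "t \<in> chain_weights L le" "0 < sum t P"
  shows "normalized_restriction P t \<in> topspace (order_complex_realization P le)"
proof -
  have "(\<Sum>x\<in>P. normalized_restriction P t x) = (\<Sum>x\<in>P. t x / sum t P)"
    unfolding normalized_restriction_def by (rule sum.cong) simp_all
  also have "\<dots> = 1" using assms(2) by (simp flip: sum_divide_distrib)
  finally show ?thesis
    using assms unfolding topspace_order_complex_realization chain_weights_def normalized_restriction_def
    by (auto simp: zero_less_divide_iff)
qed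

lemma normalized_restriction_id:
  "t \<in> topspace (order_complex_realization P le) \<Longrightarrow> normalized_restriction P t = t"
  unfolding topspace_order_complex_realization chain_weights_def normalized_restriction_def by auto

lemma continuous_map_normalized_restriction:
  assumes "finite P" "\<And>t. t \<in> A \<Longrightarrow> 0 < sum t P"
  shows "continuous_map (subtopology (powertop_real UNIV) A) (powertop_real UNIV)
           (normalized_restriction P)"
  unfolding continuous_map_componentwise_UNIV
proof
  fix x
  have proj: "continuous_map (subtopology (powertop_real UNIV) A) euclideanreal (\<lambda>t. t y)" for y
    by (intro continuous_map_from_subtopology continuous_map_product_projection) simp
  have "continuous_map (subtopology (powertop_real UNIV) A) euclideanreal (\<lambda>t. t x / sum t P)"
    using assms(2) by (intro continuous_map_real_divide continuous_map_sum proj assms(1)) force+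
  then show "continuous_map (subtopology (powertop_real UNIV) A) euclideanreal
      (\<lambda>t. normalized_restriction P t x)"
    unfolding normalized_restriction_def by (cases "x \<in> P") simp_all
qed

lemma realization_subposet_subset:
  assumes "finite L" "P \<subseteq> L"
  shows "topspace (order_complex_realization P le) \<subseteq> topspace (order_complex_realization L le)"
proof
  fix t assume "t \<in> topspace (order_complex_realization P le)"
  then have t: "t \<in> chain_weights P le" "sum t P = 1"
    by (simp_all add: topspace_order_complex_realization)
  have "sum t L = sum t P"
    using t(1) assms unfolding chain_weights_def by (intro sum.mono_neutral_right) auto
  then show "t \<in> topspace (order_complex_realization L le)"
    using t chain_weights_mono[OF assms(2)] by (auto simp: topspace_order_complex_realization)
qed

lemma realization_has_top:
  assumes "finite P" "transp le" "t \<in> topspace (order_complex_realization P le)"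
  shows "\<exists>C\<in>P. is_chain_top le t C"
proof -
  have t: "t \<in> chain_weights P le" "sum t P = 1"
    using assms(3) by (simp_all add: topspace_order_complex_realization)
  then have "t \<noteq> (\<lambda>_. 0)" by auto
  then obtain C where C: "is_chain_top le t C" using chain_weights_has_top[OF assms(1,2) t(1)] by blast
  moreover have "C \<in> P" using C t(1) unfolding is_chain_top_def chain_weights_def by force
  ultimately show ?thesis by blast
qed

lemma realization_interpolation_topped:
  assumes "finite L" "P \<subseteq> L" "t \<in> topspace (order_complex_realization L le)"
    and "C \<in> P" "is_chain_top le t C" "0 \<le> s" "s \<le> 1"
  defines "h \<equiv> \<lambda>x. (1 - s) * normalized_restriction P t x + s * t x"
  shows "h \<in> topspace (order_complex_realization L le)" "is_chain_top le h C"
proof -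
  let ?r = "normalized_restriction P t"
  have t: "t \<in> chain_weights L le" "sum t L = 1"
    using assms(3) by (simp_all add: topspace_order_complex_realization)
  have pos: "0 < sum t P"
    by (rule chain_top_sum_pos[OF t(1) finite_subset[OF assms(2,1)] assms(4,5)])
  have "?r \<in> topspace (order_complex_realization L le)"
    using normalized_restriction_in_realization[OF t(1) pos] realization_subposet_subset[OF assms(1,2)]
    by blast
  then have r: "?r \<in> chain_weights L le" "sum ?r L = 1"
    by (simp_all add: topspace_order_complex_realization)
  have supp: "\<forall>x. 0 < ?r x \<longrightarrow> 0 < t x"
    using pos unfolding normalized_restriction_def by (simp add: zero_less_divide_iff)
  note comb = chain_weights_convex_combination[OF t(1) r(1) supp assms(6,7)]
  have "sum h L = (1 - s) * sum ?r L + s * sum t L"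
    unfolding h_def by (simp add: sum.distrib sum_distrib_left)
  then have "sum h L = 1" using r(2) t(2) by simp
  then show "h \<in> topspace (order_complex_realization L le)"
    using comb(2) unfolding h_def by (simp add: topspace_order_complex_realization)
  have "0 < ?r C" using assms(4,5) pos unfolding normalized_restriction_def is_chain_top_def by simp
  then have "0 < h C"
    using assms(5-7) unfolding h_def is_chain_top_def
    by (cases "s < 1") (auto intro: add_pos_nonneg add_nonneg_pos)
  then show "is_chain_top le h C" using assms(5) comb(1) unfolding is_chain_top_def h_def by auto
qed

lemma subposet_realization_homotopy_equivalent:
  assumes "finite L" "P \<subseteq> L" "transp le"
  shows "subtopology (order_complex_realization L le) {t. \<exists>C\<in>P. is_chain_top le t C}
           homotopy_equivalent_space order_complex_realization P le"
proof -
  let ?L = "order_complex_realization L le"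
  let ?Y = "order_complex_realization P le"
  define A where "A = topspace ?L \<inter> {t. \<exists>C\<in>P. is_chain_top le t C}"
  define h where "h = (\<lambda>p x. (1 - fst p) * normalized_restriction P (snd p) x + fst p * snd p x)"
  let ?X = "subtopology (powertop_real UNIV) A"
  have X_eq: "subtopology ?L {t. \<exists>C\<in>P. is_chain_top le t C} = ?X"
    unfolding A_def by (simp add: order_complex_realization_eq subtopology_subtopology)
  have "finite P" using assms(1,2) finite_subset by blast
  have sum_pos: "0 < sum t P" if "t \<in> A" for t
    using that chain_top_sum_pos[OF _ \<open>finite P\<close>]
    unfolding A_def by (auto simp: topspace_order_complex_realization)
  note r_cont = continuous_map_normalized_restriction[of P A, OF \<open>finite P\<close> sum_pos]
  have r_Y: "normalized_restriction P t \<in> topspace ?Y" if "t \<in> A" for t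
    using normalized_restriction_in_realization[OF _ sum_pos[OF that]] that
    unfolding A_def by (auto simp: topspace_order_complex_realization)
  have Y_A: "topspace ?Y \<subseteq> A"
    using realization_subposet_subset[OF assms(1,2)] realization_has_top[OF \<open>finite P\<close> assms(3)]
    unfolding A_def by blast
  have retraction: "retraction_maps ?X ?Y (normalized_restriction P) id"
    unfolding retraction_maps_def
  proof (intro conjI ballI)
    show "continuous_map ?X ?Y (normalized_restriction P)"
      using r_cont r_Y by (auto simp: continuous_map_into_order_complex_realization)
    show "continuous_map ?Y ?X id"
      using Y_A by (auto simp: continuous_map_in_subtopology order_complex_realization_eq
          intro: continuous_map_from_subtopology)
  qed (simp add: normalized_restriction_id)
  let ?Z = "prod_topology (top_of_set {0..1::real}) ?X"
  have id_cont: "continuous_map ?X (powertop_real UNIV) id"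
    by (intro continuous_map_from_subtopology continuous_map_id)
  have "continuous_map ?Z (powertop_real UNIV) h"
    using continuous_map_powertop_real_interpolation[OF r_cont id_cont] unfolding h_def by simp
  moreover have "h p \<in> A" if "p \<in> topspace ?Z" for p
    using that realization_interpolation_topped[OF assms(1,2)] unfolding A_def h_def by force
  ultimately have "continuous_map ?Z ?X h" by (auto simp: continuous_map_in_subtopology)
  then have "homotopic_with (\<lambda>_. True) ?X ?X (id \<circ> normalized_restriction P) id"
    unfolding homotopic_with_def by (intro exI[of _ h] conjI) (auto simp: h_def)
  then show ?thesis
    unfolding X_eq by (rule deformation_retraction_imp_homotopy_equivalent_space[OF _ retraction])
qed

section \<open>The sphere outside two separated cones\<close>

lemma positive_cone_add:
  fixes U :: "'a::real_vector set"
  assumes "convex U" "\<forall>y\<in>U. \<forall>c>0. c *\<^sub>R y \<in> U" "x \<in> U" "y \<in> U"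
  shows "x + y \<in> U"
proof -
  have "(1/2) *\<^sub>R x + (1/2) *\<^sub>R y \<in> U" using assms(1,3,4) by (rule convexD) auto
  then have "2 *\<^sub>R ((1/2) *\<^sub>R x + (1/2) *\<^sub>R y) \<in> U" using assms(2) by simp
  then show ?thesis by (simp add: scaleR_add_right)
qed

lemma diff_notin_positive_cone:
  fixes U :: "'a::real_vector set"
  assumes "convex U" "\<forall>y\<in>U. \<forall>c>0. c *\<^sub>R y \<in> U" "p \<in> U" "0 \<le> k" "x \<notin> U" "x \<noteq> 0"
  shows "x - k *\<^sub>R p \<notin> U \<and> x - k *\<^sub>R p \<noteq> 0"
proof (cases "k = 0")
  case True
  then show ?thesis using assms(5,6) by simp
next
  case False
  then have kp: "k *\<^sub>R p \<in> U" using assms(2-4) by simp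
  have "x - k *\<^sub>R p \<notin> U"
  proof
    assume "x - k *\<^sub>R p \<in> U"
    then have "x - k *\<^sub>R p + k *\<^sub>R p \<in> U" using positive_cone_add[OF assms(1,2) _ kp] by blast
    then show False using assms(5) by simp
  qed
  moreover have "x \<noteq> k *\<^sub>R p" using kp assms(5) by blast
  ultimately show ?thesis by simp
qed

lemma push_along_positive_cone_avoids:
  fixes f :: "'a::real_vector \<Rightarrow> real"
  assumes "convex U" "\<forall>y\<in>U. \<forall>c>0. c *\<^sub>R y \<in> U" "p \<in> U"
    and "linear f" "0 < f p" "\<forall>y\<in>V. f y < 0"
    and "x \<notin> U \<union> V \<union> {0}" "0 \<le> f x" "0 \<le> s" "s \<le> 1"
  shows "x - (s * f x / f p) *\<^sub>R p \<notin> U \<union> V \<union> {0}"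
proof -
  have "f (x - (s * f x / f p) *\<^sub>R p) = (1 - s) * f x"
    using assms(4,5) by (simp add: linear_diff linear_scale algebra_simps)
  then have "x - (s * f x / f p) *\<^sub>R p \<notin> V"
    using assms(6,8,10) by (metis diff_ge_0_iff_ge mult_nonneg_nonneg not_less)
  moreover have "0 \<le> s * f x / f p" using assms(5,8,9) by simp
  ultimately show ?thesis
    using diff_notin_positive_cone[OF assms(1-3)] assms(7) by blast
qed

lemma sgn_notin_positive_cone:
  fixes U :: "'a::real_normed_vector set"
  assumes "\<forall>y\<in>U. \<forall>c>0. c *\<^sub>R y \<in> U" "x \<notin> U" "x \<noteq> 0"
  shows "sgn x \<notin> U"
proof
  assume "sgn x \<in> U"
  then have "norm x *\<^sub>R sgn x \<in> U" using assms(1,3) by simp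
  then show False using assms(2,3) by (simp add: sgn_div_norm)
qed

lemma push_to_kernel_avoids_cones:
  fixes f :: "'a::real_vector \<Rightarrow> real"
  assumes U: "convex U" "\<forall>y\<in>U. \<forall>c>0. c *\<^sub>R y \<in> U" "p \<in> U"
    and V: "convex V" "\<forall>y\<in>V. \<forall>c>0. c *\<^sub>R y \<in> V" "q \<in> V"
    and f: "linear f" "\<forall>x\<in>U. 0 < f x" "\<forall>x\<in>V. f x < 0"
    and x: "x \<notin> U \<union> V \<union> {0}" and s: "0 \<le> s" "s \<le> 1"
  shows "x - s *\<^sub>R ((max (f x) 0 / f p) *\<^sub>R p + (min (f x) 0 / f q) *\<^sub>R q) \<notin> U \<union> V \<union> {0}"
proof (cases "0 \<le> f x")
  case True
  then show ?thesis
    using push_along_positive_cone_avoids[OF U f(1) _ f(3) x True s] U(3) f(2) by simp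
next
  case False
  have "linear (\<lambda>x. - f x)" using f(1) by (rule linear_compose_neg)
  then have "x - (s * - f x / - f q) *\<^sub>R q \<notin> V \<union> U \<union> {0}"
    using push_along_positive_cone_avoids[OF V, of "\<lambda>x. - f x" U x s] V(3) f(2,3) False x s by auto
  then show ?thesis using False by (simp add: Un_commute)
qed

lemma kernel_deformation_outside_cones:
  fixes f :: "'a::euclidean_space \<Rightarrow> real"
  assumes U: "convex U" "\<forall>y\<in>U. \<forall>c>0. c *\<^sub>R y \<in> U" "p \<in> U"
    and V: "convex V" "\<forall>y\<in>V. \<forall>c>0. c *\<^sub>R y \<in> V" "q \<in> V"
    and f: "linear f" "\<forall>x\<in>U. 0 < f x" "\<forall>x\<in>V. f x < 0"
  defines "W \<equiv> - (U \<union> V \<union> {0})"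
  obtains r where "continuous_on W r" "r ` W \<subseteq> W \<inter> {x. f x = 0}"
    "\<And>x. f x = 0 \<Longrightarrow> r x = x" "homotopic_with_canon (\<lambda>_. True) W W r id"
proof
  \<comment> \<open>\<open>m x\<close> is the multiple of \<open>p\<close> or of \<open>q\<close> (by the sign of \<open>f x\<close>) on which \<open>f\<close>
    takes the value \<open>f x\<close>\<close>
  define m where "m x = (max (f x) 0 / f p) *\<^sub>R p + (min (f x) 0 / f q) *\<^sub>R q" for x
  have fp: "0 < f p" and fq: "f q < 0" using U(3) V(3) f(2,3) by auto
  have push: "x - s *\<^sub>R m x \<in> W" if "x \<in> W" "0 \<le> s" "s \<le> 1" for x s
    using push_to_kernel_avoids_cones[OF U V f _ that(2,3)] that(1) unfolding W_def m_def by blast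
  have "continuous_on W f" using f(1) linear_continuous_on linear_conv_bounded_linear by blast
  then show "continuous_on W (\<lambda>x. x - m x)"
    unfolding m_def using fp fq by (intro continuous_intros) auto
  have "f (x - m x) = 0" for x
    unfolding m_def using f(1) fp fq by (simp add: linear_diff linear_add linear_scale max_def min_def)
  then show "(\<lambda>x. x - m x) ` W \<subseteq> W \<inter> {x. f x = 0}" using push[of _ 1] by auto
  show "x - m x = x" if "f x = 0" for x using that unfolding m_def by simp
  show "homotopic_with_canon (\<lambda>_. True) W W (\<lambda>x. x - m x) id"
  proof (rule homotopic_with_linear)
    show "closed_segment (x - m x) (id x) \<subseteq> W" if "x \<in> W" for x
    proof
      fix y assume "y \<in> closed_segment (x - m x) (id x)"
      then obtain u where u: "0 \<le> u" "u \<le> 1" "y = (1 - u) *\<^sub>R (x - m x) + u *\<^sub>R x"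
        unfolding closed_segment_def by auto
      then have "y = x - (1 - u) *\<^sub>R m x" by (simp add: algebra_simps)
      then show "y \<in> W" using push[OF that, of "1 - u"] u(1,2) by simp
    qed
  qed (use \<open>continuous_on W (\<lambda>x. x - m x)\<close> in \<open>simp_all add: continuous_on_id\<close>)
qed

lemma radial_deformation_homotopy_equivalent:
  fixes W K :: "'a::real_normed_vector set"
  assumes W: "0 \<notin> W" "\<And>x. x \<in> W \<Longrightarrow> sgn x \<in> W" and K: "\<And>x. x \<in> K \<Longrightarrow> sgn x \<in> K"
    and r: "continuous_on W r" "r ` W \<subseteq> W \<inter> K" "\<And>x. x \<in> W \<inter> K \<Longrightarrow> r x = x"
    and hom: "homotopic_with_canon (\<lambda>_. True) W W r id"
  shows "top_of_set (sphere 0 1 \<inter> W) homotopy_equivalent_space top_of_set (sphere 0 1 \<inter> W \<inter> K)"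
proof -
  let ?S = "sphere 0 1 \<inter> W" and ?E = "sphere 0 1 \<inter> W \<inter> K"
  have sgn_S: "sgn x \<in> ?S" if "x \<in> W" for x
    using that W by (auto simp: norm_sgn)
  have retraction: "retraction_maps (top_of_set ?S) (top_of_set ?E) (sgn \<circ> r) id"
    unfolding retraction_maps_def
  proof (intro conjI ballI)
    have "continuous_on W (sgn \<circ> r)"
      unfolding o_def using r(1,2) W(1) by (intro continuous_intros) auto
    then show "continuous_map (top_of_set ?S) (top_of_set ?E) (sgn \<circ> r)"
      using r(2) sgn_S K by (auto intro: continuous_on_subset)
    show "continuous_map (top_of_set ?E) (top_of_set ?S) id" by (auto simp: continuous_on_id)
  next
    fix x assume "x \<in> topspace (top_of_set ?E)"
    then show "(sgn \<circ> r) (id x) = x" using r(3) by (simp add: sgn_div_norm)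
  qed
  have "homotopic_with (\<lambda>_. True) (top_of_set W) (top_of_set ?S) (sgn \<circ> r) (sgn \<circ> id)"
    by (rule homotopic_with_compose_continuous_map_left[OF hom])
      (use sgn_S W(1) in \<open>auto intro!: continuous_intros\<close>)
  then have "homotopic_with_canon (\<lambda>_. True) ?S ?S (sgn \<circ> r) (sgn \<circ> id)"
    by (rule homotopic_with_subset_left) blast
  then have "homotopic_with (\<lambda>_. True) (top_of_set ?S) (top_of_set ?S) (id \<circ> (sgn \<circ> r)) id"
    by (rule homotopic_with_eq) (auto simp: sgn_div_norm)
  then show ?thesis
    by (rule deformation_retraction_imp_homotopy_equivalent_space[OF _ retraction])
qed

lemma sphere_diff_separated_cones_homotopy_equivalent_kernel:
  fixes f :: "'a::euclidean_space \<Rightarrow> real"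
  assumes U: "convex U" "\<forall>y\<in>U. \<forall>c>0. c *\<^sub>R y \<in> U" "p \<in> U"
    and V: "convex V" "\<forall>y\<in>V. \<forall>c>0. c *\<^sub>R y \<in> V" "q \<in> V"
    and f: "linear f" "\<forall>x\<in>U. 0 < f x" "\<forall>x\<in>V. f x < 0"
  shows "top_of_set (sphere 0 1 - (U \<union> V)) homotopy_equivalent_space
           top_of_set (sphere 0 1 \<inter> {x. f x = 0})"
proof -
  let ?W = "- (U \<union> V \<union> {0})"
  obtain r where r: "continuous_on ?W r" "r ` ?W \<subseteq> ?W \<inter> {x. f x = 0}"
    "\<And>x. f x = 0 \<Longrightarrow> r x = x" "homotopic_with_canon (\<lambda>_. True) ?W ?W r id"
    by (rule kernel_deformation_outside_cones[OF U V f]) blast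
  have "sgn x \<in> ?W" if "x \<in> ?W" for x
    using that sgn_notin_positive_cone[OF U(2)] sgn_notin_positive_cone[OF V(2)]
    by (auto simp: sgn_zero_iff)
  moreover have "sgn x \<in> {x. f x = 0}" if "x \<in> {x. f x = 0}" for x
    using that f(1) by (simp add: sgn_div_norm linear_scale)
  ultimately have "top_of_set (sphere 0 1 \<inter> ?W) homotopy_equivalent_space
      top_of_set (sphere 0 1 \<inter> ?W \<inter> {x. f x = 0})"
    using r by (intro radial_deformation_homotopy_equivalent) auto
  moreover have "sphere 0 1 \<inter> ?W = sphere 0 1 - (U \<union> V)" by auto
  moreover have "sphere 0 1 \<inter> ?W \<inter> {x. f x = 0} = sphere 0 1 \<inter> {x. f x = 0}"
    using f(2,3) by force
  ultimately show ?thesis by simp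
qed

lemma sphere_inter_hyperplanes_homeomorphic:
  fixes u w :: "'a::euclidean_space"
  assumes "u \<noteq> 0" "w \<noteq> 0"
  shows "top_of_set (sphere 0 1 \<inter> {x. u \<bullet> x = 0}) homeomorphic_space
           top_of_set (sphere 0 1 \<inter> {x. w \<bullet> x = 0})"
proof -
  let ?H = "\<lambda>a::'a. {x. a \<bullet> x = 0}"
  have "dim (?H u) = dim (?H w)" using dim_hyperplane[OF assms(1)] dim_hyperplane[OF assms(2)] by simp
  then obtain g h where "linear g" "linear h" "g ` ?H u = ?H w" "h ` ?H w = ?H u"
    and norm: "\<And>x. x \<in> ?H u \<Longrightarrow> norm (g x) = norm x" "\<And>x. x \<in> ?H w \<Longrightarrow> norm (h x) = norm x"
    and inv: "\<And>x. x \<in> ?H u \<Longrightarrow> h (g x) = x" "\<And>x. x \<in> ?H w \<Longrightarrow> g (h x) = x"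
    by (rule isometries_subspaces[OF subspace_hyperplane subspace_hyperplane]) (rule that; assumption)
  moreover have "continuous_on A g" "continuous_on A h" for A
    using \<open>linear g\<close> \<open>linear h\<close> linear_continuous_on linear_conv_bounded_linear by blast+
  ultimately have "homeomorphic_maps (top_of_set (sphere 0 1 \<inter> ?H u)) (top_of_set (sphere 0 1 \<inter> ?H w)) g h"
    unfolding homeomorphic_maps_def by (auto simp: image_subset_iff)
  then show ?thesis using homeomorphic_maps_imp_homeomorphic_space by blast
qed

lemma kernel_sphere_homeomorphic_codim2_sphere:
  fixes f :: "'a::euclidean_space \<Rightarrow> real"
  assumes "linear f" "f p \<noteq> 0"
  shows "top_of_set (sphere 0 1 \<inter> {x. f x = 0}) homeomorphic_space codim2_sphere TYPE('a)"
proof -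
  define w where "w = adjoint f 1"
  have f_eq: "f x = w \<bullet> x" for x
    using adjoint_works[OF assms(1), of x 1] unfolding w_def by (simp add: inner_commute)
  have "w \<noteq> 0" using assms(2) f_eq by auto
  define b where "b = (SOME b. b \<in> (Basis::'a set))"
  have "b \<in> Basis" unfolding b_def by (rule someI_ex) (use nonempty_Basis in blast)
  then have "b \<noteq> 0" by (rule nonzero_Basis)
  have "codim2_sphere TYPE('a) = top_of_set (sphere 0 1 \<inter> {x. b \<bullet> x = 0})"
    unfolding codim2_sphere_def b_def by (simp add: Int_def inner_commute)
  moreover have "sphere 0 1 \<inter> {x. f x = 0} = sphere 0 1 \<inter> {x. w \<bullet> x = 0}"
    using f_eq by simp
  ultimately show ?thesis
    using sphere_inter_hyperplanes_homeomorphic[OF \<open>w \<noteq> 0\<close> \<open>b \<noteq> 0\<close>] by simp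
qed

section \<open>Complete fans\<close>

locale fan =
  fixes F :: "'a::euclidean_space set set"
  assumes complete_fan: "complete_fan F"
begin

lemma finite_fan: "finite F"
  using complete_fan unfolding complete_fan_def by blast

lemma fan_covers: "\<exists>C\<in>F. x \<in> C"
  using complete_fan unfolding complete_fan_def by blast

lemma closure_fan_cone:
  assumes "C \<in> F"
  shows "closed (closure C)" "convex (closure C)" "cone (closure C)" "convex_cone (closure C)"
    and "\<forall>x\<in>closure C. - x \<in> closure C \<longrightarrow> x = 0"
    and "rel_interior (closure C) = C" "C \<noteq> {}"
proof -
  obtain K where K: "polyhedron K" "cone K" "K \<noteq> {}" "\<forall>x\<in>K. - x \<in> K \<longrightarrow> x = 0"
    "C = rel_interior K"
    using complete_fan assms unfolding complete_fan_def pointed_polyhedral_cone_def by blast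
  have "convex K" "closed K" using K(1) polyhedron_imp_convex polyhedron_imp_closed by blast+
  then have K_eq: "closure C = K"
    using K(5) convex_closure_rel_interior closure_closed by metis
  show "closed (closure C)" "convex (closure C)" "cone (closure C)"
    "\<forall>x\<in>closure C. - x \<in> closure C \<longrightarrow> x = 0" "rel_interior (closure C) = C"
    using K_eq K \<open>convex K\<close> \<open>closed K\<close> by auto
  then show "convex_cone (closure C)"
    using K_eq K(3) unfolding convex_cone_def conic_def cone_def by blast
  show "C \<noteq> {}" using K(3,5) \<open>convex K\<close> rel_interior_eq_empty by blast
qed

lemma fan_cone_scaleR: "C \<in> F \<Longrightarrow> x \<in> C \<Longrightarrow> 0 < c \<Longrightarrow> c *\<^sub>R x \<in> C"
  using rel_interior_cone_scaleR[of "closure C" x c] closure_fan_cone[of C] by simp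

lemma fan_cone_add_closure: "C \<in> F \<Longrightarrow> x \<in> C \<Longrightarrow> y \<in> closure C \<Longrightarrow> x + y \<in> C"
  using rel_interior_convex_cone_add[of "closure C" x y] closure_fan_cone[of C] by simp

lemma fan_cone_eq_0: "C \<in> F \<Longrightarrow> 0 \<in> C \<Longrightarrow> C = {0}"
  using pointed_cone_eq_0_if_0_in_rel_interior[of "closure C"] closure_fan_cone[of C]
  by (metis rel_interior_sing)

lemma fan_faces:
  assumes "C \<in> F" "D \<in> F"
  shows "(closure C \<inter> closure D) face_of closure C" "(closure C \<inter> closure D) face_of closure D"
  using complete_fan assms unfolding complete_fan_def by blast+

lemma fan_le_if_mem_closure:
  assumes "C \<in> F" "D \<in> F" "x \<in> D" "x \<in> closure C"
  shows "fan_le D C"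
proof -
  have "x \<in> closure D \<inter> closure C" "x \<in> rel_interior (closure D)"
    using assms closure_subset closure_fan_cone(6)[OF assms(2)] by auto
  then have "closure D \<inter> closure C = closure D"
    using face_of_disjoint_rel_interior[OF fan_faces(1)[OF assms(2,1)]] by blast
  then show ?thesis using fan_faces(2)[OF assms(2,1)] unfolding fan_le_def by simp
qed

lemma fan_le_refl: "C \<in> F \<Longrightarrow> fan_le C C"
  unfolding fan_le_def using closure_fan_cone(2) face_of_refl by blast

lemma transp_fan_le: "transp fan_le"
  unfolding fan_le_def transp_def using face_of_trans by blast

lemma fan_le_antisym: "C \<in> F \<Longrightarrow> D \<in> F \<Longrightarrow> fan_le C D \<Longrightarrow> fan_le D C \<Longrightarrow> C = D"
  unfolding fan_le_def using face_of_imp_subset closure_fan_cone(6) by (metis subset_antisym)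

lemma fan_cones_disjoint:
  assumes "C \<in> F" "D \<in> F" "x \<in> C" "x \<in> D"
  shows "C = D"
  using fan_le_if_mem_closure[OF assms(1,2,4)] fan_le_if_mem_closure[OF assms(2,1,3)] assms(3,4)
    closure_subset fan_le_antisym[OF assms(1,2)] by blast

definition nonzero_cones :: "'a set set" where
  "nonzero_cones = {C \<in> F. C \<noteq> {0}}"

definition ray_point :: "'a set \<Rightarrow> 'a" where
  "ray_point C = (SOME x. x \<in> C)"

definition chain_vector :: "('a set \<Rightarrow> real) \<Rightarrow> 'a" where
  "chain_vector t = (\<Sum>C\<in>nonzero_cones. t C *\<^sub>R ray_point C)"

abbreviation chains :: "('a set \<Rightarrow> real) set" where
  "chains \<equiv> chain_weights nonzero_cones fan_le"

lemma finite_nonzero_cones: "finite nonzero_cones"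
  using finite_fan unfolding nonzero_cones_def by simp

lemma ray_point:
  assumes "C \<in> nonzero_cones"
  shows "ray_point C \<in> C" "ray_point C \<noteq> 0"
proof -
  have C: "C \<in> F" "C \<noteq> {0}" using assms unfolding nonzero_cones_def by auto
  then show "ray_point C \<in> C"
    unfolding ray_point_def using closure_fan_cone(7) by (metis some_in_eq)
  then show "ray_point C \<noteq> 0" using C fan_cone_eq_0 by fastforce
qed

lemma chains_top_in_nonzero_cones: "t \<in> chains \<Longrightarrow> is_chain_top fan_le t C \<Longrightarrow> C \<in> nonzero_cones"
  unfolding chain_weights_def is_chain_top_def by force

lemma chains_has_top:
  assumes "t \<in> chains" "t \<noteq> (\<lambda>_. 0)"
  obtains C where "is_chain_top fan_le t C"
  using chain_weights_has_top[OF finite_nonzero_cones transp_fan_le assms] by blast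

lemma chains_upd_0: "t \<in> chains \<Longrightarrow> t(C := 0) \<in> chains"
  unfolding chain_weights_def by auto

lemma chain_vector_upd:
  assumes "C \<in> nonzero_cones"
  shows "chain_vector (t(C := a)) = chain_vector t + (a - t C) *\<^sub>R ray_point C"
proof -
  have rest: "(\<Sum>D\<in>nonzero_cones - {C}. (t(C := a)) D *\<^sub>R ray_point D) =
      (\<Sum>D\<in>nonzero_cones - {C}. t D *\<^sub>R ray_point D)"
    by (rule sum.cong) auto
  show ?thesis
    unfolding chain_vector_def
    using sum.remove[OF finite_nonzero_cones assms, of "\<lambda>D. (t(C := a)) D *\<^sub>R ray_point D"]
      sum.remove[OF finite_nonzero_cones assms, of "\<lambda>D. t D *\<^sub>R ray_point D"] rest
    by (simp add: algebra_simps)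
qed

lemma chain_vector_scale: "chain_vector (\<lambda>C. k * t C) = k *\<^sub>R chain_vector t"
  unfolding chain_vector_def by (simp add: scaleR_sum_right)

lemma chain_vector_in_closure:
  assumes "t \<in> chains" "C \<in> F" "\<forall>D. 0 < t D \<longrightarrow> fan_le D C"
  shows "chain_vector t \<in> closure C"
  unfolding chain_vector_def
proof (rule convex_cone_sum_mem[OF closure_fan_cone(4)[OF assms(2)] finite_nonzero_cones])
  fix D assume D: "D \<in> nonzero_cones"
  show "t D *\<^sub>R ray_point D \<in> closure C"
  proof (cases "0 < t D")
    case True
    then have "ray_point D \<in> closure C"
      using assms(3) ray_point(1)[OF D] closure_subset face_of_imp_subset
      unfolding fan_le_def by blast
    then show ?thesis by (rule mem_cone[OF closure_fan_cone(3)[OF assms(2)]]) (use True in simp)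
  next
    case False
    then have "t D = 0" by (rule chain_weights_not_pos[OF assms(1)])
    then show ?thesis using closure_fan_cone(4)[OF assms(2)] convex_cone_contains_0 by simp
  qed
qed

lemma chain_vector_remove_top:
  assumes "t \<in> chains" "is_chain_top fan_le t C"
  shows "chain_vector t = t C *\<^sub>R ray_point C + chain_vector (t(C := 0))"
    and "chain_vector (t(C := 0)) \<in> closure C"
proof -
  have C: "C \<in> nonzero_cones" "C \<in> F"
    using chains_top_in_nonzero_cones[OF assms] unfolding nonzero_cones_def by auto
  show "chain_vector t = t C *\<^sub>R ray_point C + chain_vector (t(C := 0))"
    using chain_vector_upd[OF C(1), of t 0] by simp
  show "chain_vector (t(C := 0)) \<in> closure C"
    using assms(2) unfolding is_chain_top_def
    by (intro chain_vector_in_closure[OF chains_upd_0[OF assms(1)] C(2)]) simp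
qed

lemma chain_vector_in_top:
  assumes "t \<in> chains" "is_chain_top fan_le t C"
  shows "chain_vector t \<in> C"
proof -
  have C: "C \<in> nonzero_cones" "C \<in> F"
    using chains_top_in_nonzero_cones[OF assms] unfolding nonzero_cones_def by auto
  have "t C *\<^sub>R ray_point C \<in> C"
    using assms(2) ray_point(1)[OF C(1)] fan_cone_scaleR[OF C(2)] unfolding is_chain_top_def by blast
  then show ?thesis
    using chain_vector_remove_top[OF assms] fan_cone_add_closure[OF C(2)] by simp
qed

lemma chain_vector_eq_0_iff:
  assumes "t \<in> chains"
  shows "chain_vector t = 0 \<longleftrightarrow> t = (\<lambda>_. 0)"
proof
  assume "chain_vector t = 0"
  show "t = (\<lambda>_. 0)"
  proof (rule ccontr)
    assume "t \<noteq> (\<lambda>_. 0)"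
    then obtain C where C: "is_chain_top fan_le t C" using chains_has_top[OF assms] by blast
    then have "C \<in> F" "C \<noteq> {0}" using chains_top_in_nonzero_cones[OF assms] nonzero_cones_def by auto
    then show False
      using chain_vector_in_top[OF assms C] \<open>chain_vector t = 0\<close> fan_cone_eq_0 by auto
  qed
qed (simp add: chain_vector_def)

lemma chain_vector_remove_top_notin:
  assumes "t \<in> chains" "is_chain_top fan_le t C"
  shows "chain_vector (t(C := 0)) \<notin> C"
proof
  assume in_C: "chain_vector (t(C := 0)) \<in> C"
  have C: "C \<in> F" "C \<noteq> {0}"
    using chains_top_in_nonzero_cones[OF assms] unfolding nonzero_cones_def by auto
  have t0: "t(C := 0) \<in> chains" by (rule chains_upd_0[OF assms(1)])
  show False
  proof (cases "t(C := 0) = (\<lambda>_. 0)")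
    case True
    then show False using in_C C fan_cone_eq_0 chain_vector_eq_0_iff[OF t0] by auto
  next
    case False
    then obtain D where D: "is_chain_top fan_le (t(C := 0)) D" using chains_has_top[OF t0] by blast
    then have "D \<noteq> C" "D \<in> F"
      using chains_top_in_nonzero_cones[OF t0] unfolding is_chain_top_def nonzero_cones_def by auto
    then show False using fan_cones_disjoint[OF \<open>D \<in> F\<close> C(1) chain_vector_in_top[OF t0 D] in_C] by simp
  qed
qed

lemma chain_vector_determines_top:
  assumes "t \<in> chains" "t' \<in> chains" "chain_vector t = chain_vector t'"
    and "is_chain_top fan_le t C" "is_chain_top fan_le t' C'"
  shows "C' = C" "t' C = t C" "chain_vector (t'(C := 0)) = chain_vector (t(C := 0))"
proof -
  have C: "C \<in> nonzero_cones" "C' \<in> nonzero_cones"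
    using chains_top_in_nonzero_cones assms(1,2,4,5) by blast+
  then have CF: "C \<in> F" "C' \<in> F" unfolding nonzero_cones_def by auto
  show "C' = C"
    using fan_cones_disjoint[OF CF(2,1) chain_vector_in_top[OF assms(2,5)]]
      chain_vector_in_top[OF assms(1,4)] assms(3) by simp
  then have top': "is_chain_top fan_le t' C" using assms(5) by simp
  let ?v = "ray_point C"
  have "t C *\<^sub>R ?v + chain_vector (t(C := 0)) = chain_vector t"
    by (rule chain_vector_remove_top(1)[OF assms(1,4), symmetric])
  also have "\<dots> = chain_vector t'" by (rule assms(3))
  also have "\<dots> = t' C *\<^sub>R ?v + chain_vector (t'(C := 0))"
    by (rule chain_vector_remove_top(1)[OF assms(2) top'])
  finally have eq: "t C *\<^sub>R ?v + chain_vector (t(C := 0)) = t' C *\<^sub>R ?v + chain_vector (t'(C := 0))" .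
  have ri: "rel_interior (closure C) = C" by (rule closure_fan_cone(6)[OF CF(1)])
  have "chain_vector (t(C := 0)) \<in> closure C - rel_interior (closure C)"
    using chain_vector_remove_top(2)[OF assms(1,4)] chain_vector_remove_top_notin[OF assms(1,4)] ri
    by blast
  moreover have "chain_vector (t'(C := 0)) \<in> closure C - rel_interior (closure C)"
    using chain_vector_remove_top(2)[OF assms(2) top'] chain_vector_remove_top_notin[OF assms(2) top'] ri
    by blast
  moreover have "?v \<in> rel_interior (closure C)" using ray_point(1)[OF C(1)] ri by simp
  ultimately have "t C = t' C"
    using convex_cone_rel_frontier_decomposition_unique[OF closure_fan_cone(2,3)[OF CF(1)]] eq
    by blast
  then show "t' C = t C" by simp
  then show "chain_vector (t'(C := 0)) = chain_vector (t(C := 0))" using eq by simp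
qed

lemma inj_on_chain_vector: "inj_on chain_vector chains"
proof -
  have "t' = t" if "t \<in> chains" "t' \<in> chains" "chain_vector t = chain_vector t'" for t t'
    using that
  proof (induction "card {C \<in> nonzero_cones. 0 < t C}" arbitrary: t t' rule: less_induct)
    case less
    show ?case
    proof (cases "t = (\<lambda>_. 0)")
      case True
      have "chain_vector t' = chain_vector t" using less.prems(3) by simp
      also have "\<dots> = 0" using True chain_vector_eq_0_iff[OF less.prems(1)] by blast
      finally have "t' = (\<lambda>_. 0)" using chain_vector_eq_0_iff[OF less.prems(2)] by blast
      then show ?thesis using True by simp
    next
      case False
      have "t' \<noteq> (\<lambda>_. 0)"
      proof
        assume "t' = (\<lambda>_. 0)"
        then have "chain_vector t = 0" using less.prems(3) chain_vector_eq_0_iff[OF less.prems(2)] by simp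
        then show False using False chain_vector_eq_0_iff[OF less.prems(1)] by blast
      qed
      then obtain C' where C': "is_chain_top fan_le t' C'" using chains_has_top[OF less.prems(2)] by blast
      obtain C where C: "is_chain_top fan_le t C" using chains_has_top[OF less.prems(1) False] by blast
      note top = chain_vector_determines_top[OF less.prems C C']
      have "C \<in> {D \<in> nonzero_cones. 0 < t D}"
        using C chains_top_in_nonzero_cones[OF less.prems(1) C] unfolding is_chain_top_def by blast
      then have "card {D \<in> nonzero_cones. 0 < (t(C := 0)) D} < card {D \<in> nonzero_cones. 0 < t D}"
        using finite_nonzero_cones by (intro psubset_card_mono) auto
      then have rest: "t'(C := 0) = t(C := 0)"
        by (rule less.hyps[OF _ chains_upd_0[OF less.prems(1)] chains_upd_0[OF less.prems(2)] top(3)[symmetric]])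
      show ?thesis
      proof
        fix D show "t' D = t D" using fun_cong[OF rest, of D] top(2) by (cases "D = C") simp_all
      qed
    qed
  qed
  then show ?thesis unfolding inj_on_def by blast
qed

lemma card_fan_le_less:
  assumes "C \<in> F" "D \<in> F" "fan_le D C" "D \<noteq> C"
  shows "card {E \<in> F. fan_le E D} < card {E \<in> F. fan_le E C}"
proof -
  have "fan_le E C" if "fan_le E D" for E using transpD[OF transp_fan_le that assms(3)] .
  moreover have "C \<notin> {E \<in> F. fan_le E D}" using fan_le_antisym[OF assms(2,1,3)] assms(4) by blast
  moreover have "C \<in> {E \<in> F. fan_le E C}" using fan_le_refl[OF assms(1)] assms(1) by blast
  ultimately have "{E \<in> F. fan_le E D} \<subset> {E \<in> F. fan_le E C}" by blast
  then show ?thesis using finite_fan by (intro psubset_card_mono) auto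
qed

lemma fan_ray_exit:
  assumes "C \<in> nonzero_cones" "x \<in> C"
  obtains l D where "0 \<le> l" "D \<in> F" "x - l *\<^sub>R ray_point C \<in> D" "fan_le D C" "D \<noteq> C"
proof -
  let ?v = "ray_point C"
  have "C \<in> F" using assms(1) unfolding nonzero_cones_def by simp
  have v: "?v \<in> closure C" "?v \<noteq> 0" using ray_point[OF assms(1)] closure_subset by auto
  have "x \<in> closure C" using assms(2) closure_subset by blast
  then obtain l where "0 \<le> l" "x - l *\<^sub>R ?v \<in> closure C - rel_interior (closure C)"
    using pointed_cone_ray_leaves_rel_interior[OF closure_fan_cone(1-3,5)[OF \<open>C \<in> F\<close>] v]
    by blast
  then have l: "0 \<le> l" "x - l *\<^sub>R ?v \<in> closure C - C"
    using closure_fan_cone(6)[OF \<open>C \<in> F\<close>] by simp_all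
  obtain D where D: "D \<in> F" "x - l *\<^sub>R ?v \<in> D" using fan_covers by blast
  then have "fan_le D C" "D \<noteq> C" using fan_le_if_mem_closure[OF \<open>C \<in> F\<close> D] l(2) by auto
  then show thesis using that l(1) D by blast
qed

lemma chain_vector_surj:
  assumes "C \<in> F" "x \<in> C"
  shows "\<exists>t\<in>chains. (\<forall>D. 0 < t D \<longrightarrow> fan_le D C) \<and> chain_vector t = x"
  using assms
proof (induction "card {D \<in> F. fan_le D C}" arbitrary: C x rule: less_induct)
  case less
  show ?case
  proof (cases "C = {0}")
    case True
    have "(\<lambda>_. 0) \<in> chains" unfolding chain_weights_def by simp
    then show ?thesis using True less.prems(2) unfolding chain_vector_def by auto
  next
    case False
    then have C: "C \<in> nonzero_cones" using less.prems(1) unfolding nonzero_cones_def by simp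
    obtain l D where l: "0 \<le> l" and D: "D \<in> F" "x - l *\<^sub>R ray_point C \<in> D"
      and DC: "fan_le D C" "D \<noteq> C"
      using fan_ray_exit[OF C less.prems(2)] by blast
    have "\<exists>t\<in>chains. (\<forall>E. 0 < t E \<longrightarrow> fan_le E D) \<and> chain_vector t = x - l *\<^sub>R ray_point C"
      by (rule less.hyps[OF card_fan_le_less[OF less.prems(1) D(1) DC] D])
    then obtain t where t: "t \<in> chains" "\<forall>E. 0 < t E \<longrightarrow> fan_le E D"
      "chain_vector t = x - l *\<^sub>R ray_point C"
      by blast
    have "\<not> 0 < t C" using t(2) fan_le_antisym[OF D(1) less.prems(1) DC(1)] DC(2) by blast
    then have "t C = 0" by (rule chain_weights_not_pos[OF t(1)])
    have below: "\<forall>E. 0 < t E \<longrightarrow> fan_le E C"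
      using t(2) transpD[OF transp_fan_le _ DC(1)] by blast
    then have "t(C := l) \<in> chains"
      using chain_weights_upd_top[OF t(1)] C fan_le_refl[OF less.prems(1)] l by blast
    moreover have "chain_vector (t(C := l)) = x"
      using chain_vector_upd[OF C, of t l] t(3) \<open>t C = 0\<close> by simp
    moreover have "\<forall>E. 0 < (t(C := l)) E \<longrightarrow> fan_le E C"
      using below fan_le_refl[OF less.prems(1)] by simp
    ultimately show ?thesis by blast
  qed
qed

definition sphere_map :: "('a set \<Rightarrow> real) \<Rightarrow> 'a" where
  "sphere_map t = sgn (chain_vector t)"

abbreviation realization :: "('a set \<Rightarrow> real) topology" where
  "realization \<equiv> order_complex_realization nonzero_cones fan_le"

lemma chain_vector_realization_nonzero:
  assumes "t \<in> topspace realization"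
  shows "chain_vector t \<noteq> 0"
proof -
  have "t \<in> chains" "sum t nonzero_cones = 1"
    using assms by (simp_all add: topspace_order_complex_realization)
  then show ?thesis using chain_vector_eq_0_iff by auto
qed

lemma continuous_map_sphere_map: "continuous_map realization (top_of_set (sphere 0 1)) sphere_map"
proof -
  have "continuous_map (powertop_real UNIV) euclidean chain_vector"
    unfolding chain_vector_def[abs_def]
    by (intro continuous_intros continuous_map_product_projection finite_nonzero_cones) auto
  then have "continuous_map realization euclidean sphere_map"
    unfolding sphere_map_def[abs_def] order_complex_realization_eq
    using chain_vector_realization_nonzero
    by (intro continuous_map_sgn continuous_map_from_subtopology)
      (auto simp: order_complex_realization_eq)
  then show ?thesis
    using chain_vector_realization_nonzero
    by (auto simp: continuous_map_in_subtopology sphere_map_def norm_sgn)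
qed

lemma sphere_map_surj: "sphere 0 1 \<subseteq> sphere_map ` topspace realization"
proof
  fix x :: 'a assume x: "x \<in> sphere 0 1"
  obtain C where "C \<in> F" "x \<in> C" using fan_covers by blast
  then obtain t where t: "t \<in> chains" "chain_vector t = x" using chain_vector_surj by blast
  define s where "s = sum t nonzero_cones"
  have "x \<noteq> 0" using x by auto
  then have "t \<noteq> (\<lambda>_. 0)" using chain_vector_eq_0_iff[OF t(1)] t(2) by simp
  then obtain D where "is_chain_top fan_le t D" using chains_has_top[OF t(1)] by blast
  then have "0 < t D" "D \<in> nonzero_cones"
    using chains_top_in_nonzero_cones[OF t(1)] unfolding is_chain_top_def by auto
  then have "0 < s"
    unfolding s_def using t(1) finite_nonzero_cones
    by (intro sum_pos2[of _ D]) (auto simp: chain_weights_def)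
  have "(\<lambda>D. (1 / s) * t D) \<in> chains"
    by (rule chain_weights_scale[OF t(1)]) (use \<open>0 < s\<close> in simp)
  moreover have "(\<Sum>D\<in>nonzero_cones. (1 / s) * t D) = 1"
    using \<open>0 < s\<close> by (simp add: s_def flip: sum_divide_distrib)
  ultimately have "(\<lambda>D. (1 / s) * t D) \<in> topspace realization"
    by (simp add: topspace_order_complex_realization)
  moreover have "sphere_map (\<lambda>D. (1 / s) * t D) = x"
    unfolding sphere_map_def chain_vector_scale t(2) using x \<open>0 < s\<close> by (simp add: sgn_scaleR sgn_div_norm)
  ultimately show "x \<in> sphere_map ` topspace realization" by (metis image_eqI)
qed

lemma inj_on_sphere_map: "inj_on sphere_map (topspace realization)"
proof
  fix t t' assume t: "t \<in> topspace realization" and t': "t' \<in> topspace realization"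
    and eq: "sphere_map t = sphere_map t'"
  define k where "k = norm (chain_vector t') / norm (chain_vector t)"
  have nz: "chain_vector t \<noteq> 0" "chain_vector t' \<noteq> 0"
    using chain_vector_realization_nonzero t t' by blast+
  then have "0 < k" unfolding k_def by simp
  have "chain_vector t' = norm (chain_vector t') *\<^sub>R sphere_map t'"
    unfolding sphere_map_def using nz by (simp add: sgn_div_norm)
  also have "\<dots> = norm (chain_vector t') *\<^sub>R sphere_map t" using eq by simp
  also have "\<dots> = chain_vector (\<lambda>C. k * t C)"
    unfolding sphere_map_def chain_vector_scale k_def using nz by (simp add: sgn_div_norm divide_inverse_commute)
  moreover have tc: "t \<in> chains" "t' \<in> chains"
    using t t' by (simp_all add: topspace_order_complex_realization)
  moreover note chain_weights_scale[OF tc(1) \<open>0 < k\<close>]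
  ultimately have "(\<lambda>C. k * t C) = t'"
    using inj_on_chain_vector unfolding inj_on_def by metis
  moreover have "sum t nonzero_cones = 1" "sum t' nonzero_cones = 1"
    using t t' by (simp_all add: topspace_order_complex_realization)
  ultimately have "k = 1" by (metis mult.right_neutral sum_distrib_left)
  then show "t = t'" using \<open>(\<lambda>C. k * t C) = t'\<close> by simp
qed

lemma homeomorphic_map_sphere_map:
  "homeomorphic_map realization (top_of_set (sphere 0 1)) sphere_map"
proof (rule continuous_imp_homeomorphic_map)
  show "compact_space realization"
    by (rule compact_space_order_complex_realization[OF finite_nonzero_cones])
  show "Hausdorff_space (top_of_set (sphere (0::'a) 1))"
    by (rule Hausdorff_space_subtopology) simp
  show "sphere_map ` topspace realization = topspace (top_of_set (sphere 0 1))"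
    using sphere_map_surj continuous_map_image_subset_topspace[OF continuous_map_sphere_map] by auto
qed (rule continuous_map_sphere_map inj_on_sphere_map)+

lemma union_of_fan_cones_mem_iff:
  assumes "\<exists>S\<subseteq>F. U = \<Union>S" "C \<in> F" "x \<in> C"
  shows "x \<in> U \<longleftrightarrow> C \<subseteq> U"
proof
  assume "x \<in> U"
  then obtain S D where S: "S \<subseteq> F" "U = \<Union>S" "D \<in> S" "x \<in> D" using assms(1) by blast
  then have "D = C" using fan_cones_disjoint[OF _ assms(2) _ assms(3)] by blast
  then show "C \<subseteq> U" using S by blast
qed (use assms(3) in blast)

lemma union_of_fan_cones_scaleR:
  assumes "\<exists>S\<subseteq>F. U = \<Union>S"
  shows "\<forall>y\<in>U. \<forall>c>0. c *\<^sub>R y \<in> U"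
proof (intro ballI allI impI)
  fix y and c :: real assume "y \<in> U" "0 < c"
  then obtain C where "C \<in> F" "y \<in> C" "C \<subseteq> U" using assms union_of_fan_cones_mem_iff by blast
  then show "c *\<^sub>R y \<in> U" using fan_cone_scaleR \<open>0 < c\<close> by blast
qed

lemma sphere_map_mem_union_iff:
  assumes "\<exists>S\<subseteq>F. U = \<Union>S" "t \<in> topspace realization" "is_chain_top fan_le t C"
  shows "sphere_map t \<in> U \<longleftrightarrow> C \<subseteq> U"
proof -
  have t: "t \<in> chains" using assms(2) by (simp add: topspace_order_complex_realization)
  then have "C \<in> F" using chains_top_in_nonzero_cones[OF t assms(3)] nonzero_cones_def by simp
  have "chain_vector t \<noteq> 0" by (rule chain_vector_realization_nonzero[OF assms(2)])
  then have "inverse (norm (chain_vector t)) *\<^sub>R chain_vector t \<in> C"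
    using fan_cone_scaleR[OF \<open>C \<in> F\<close> chain_vector_in_top[OF t assms(3)]] by simp
  then have "sphere_map t \<in> C" unfolding sphere_map_def by (simp add: sgn_div_norm divide_inverse_commute)
  then show ?thesis using union_of_fan_cones_mem_iff[OF assms(1) \<open>C \<in> F\<close>] by blast
qed

lemma realization_topped_outside_union_homeomorphic:
  assumes "\<exists>S\<subseteq>F. U = \<Union>S"
  shows "subtopology realization
           {t. \<exists>C\<in>nonzero_cones - {C \<in> F. C \<noteq> {0} \<and> C \<subseteq> U}. is_chain_top fan_le t C}
         homeomorphic_space top_of_set (sphere 0 1 - U)"
proof -
  let ?A = "{t. \<exists>C\<in>nonzero_cones - {C \<in> F. C \<noteq> {0} \<and> C \<subseteq> U}. is_chain_top fan_le t C}"
  have "homeomorphic_map (subtopology realization ?A)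
      (subtopology (top_of_set (sphere 0 1)) (sphere 0 1 - U)) sphere_map"
  proof (rule homeomorphic_map_subtopologies_alt[OF homeomorphic_map_sphere_map])
    fix t assume t: "t \<in> topspace realization" "sphere_map t \<in> topspace (top_of_set (sphere 0 1))"
    then have tc: "t \<in> chains" "t \<noteq> (\<lambda>_. 0)" by (auto simp: topspace_order_complex_realization)
    then obtain C where C: "is_chain_top fan_le t C" using chains_has_top by blast
    have CL: "C \<in> nonzero_cones" by (rule chains_top_in_nonzero_cones[OF tc(1) C])
    have unique: "C' = C" if C': "is_chain_top fan_le t C'" for C'
    proof (rule fan_le_antisym)
      show "C' \<in> F" "C \<in> F"
        using chains_top_in_nonzero_cones[OF tc(1) C'] CL unfolding nonzero_cones_def by auto
      show "fan_le C' C" "fan_le C C'" using C C' unfolding is_chain_top_def by blast+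
    qed
    have "t \<in> ?A \<longleftrightarrow> \<not> C \<subseteq> U"
    proof
      assume "t \<in> ?A"
      then obtain C' where "C' \<in> nonzero_cones" "\<not> C' \<subseteq> U" "is_chain_top fan_le t C'"
        unfolding nonzero_cones_def by blast
      then show "\<not> C \<subseteq> U" using unique by blast
    next
      assume "\<not> C \<subseteq> U"
      then show "t \<in> ?A" using C CL by blast
    qed
    moreover have "sphere_map t \<in> sphere 0 1" using t(2) by simp
    ultimately show "sphere_map t \<in> sphere 0 1 - U \<longleftrightarrow> t \<in> ?A"
      using sphere_map_mem_union_iff[OF assms t(1) C] by blast
  qed
  moreover have "subtopology (top_of_set (sphere 0 1)) (sphere 0 1 - U) = top_of_set (sphere (0::'a) 1 - U)"
    by (simp add: subtopology_subtopology Int_absorb1 Diff_subset)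
  ultimately show ?thesis using homeomorphic_map_imp_homeomorphic_space by fastforce
qed

end

theorem lemma6p1:
  fixes F :: "'a::euclidean_space set set"
    and Uplus Uminus :: "'a set"
    and f :: "'a \<Rightarrow> real"
  assumes "complete_fan F"
    and "Uplus \<noteq> {}" and "convex Uplus" and "\<exists>S\<subseteq>F. Uplus = \<Union>S"
    and "Uminus \<noteq> {}" and "convex Uminus" and "\<exists>S\<subseteq>F. Uminus = \<Union>S"
    and "linear f"
    and "\<forall>x\<in>Uplus. f x > 0" and "\<forall>x\<in>Uminus. f x < 0"
  shows "(order_complex_realization
              ({C \<in> F. C \<noteq> {0}} - {C \<in> F. C \<noteq> {0} \<and> C \<subseteq> Uplus \<union> Uminus}) fan_le)
           homotopy_equivalent_space (codim2_sphere TYPE('a))"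
proof -
  interpret fan F by (rule fan.intro) (rule assms(1))
  let ?U = "Uplus \<union> Uminus"
  let ?P = "nonzero_cones - {C \<in> F. C \<noteq> {0} \<and> C \<subseteq> ?U}"
  obtain p q where p: "p \<in> Uplus" and q: "q \<in> Uminus" using assms(2,5) by blast
  have U: "\<exists>S\<subseteq>F. ?U = \<Union>S" using assms(4,7) by (metis Union_Un_distrib le_sup_iff)
  have "order_complex_realization ?P fan_le homotopy_equivalent_space
      subtopology realization {t. \<exists>C\<in>?P. is_chain_top fan_le t C}"
    using subposet_realization_homotopy_equivalent[OF finite_nonzero_cones _ transp_fan_le]
      homotopy_equivalent_space_sym by blast
  also have "\<dots> homotopy_equivalent_space top_of_set (sphere 0 1 - ?U)"
    by (rule homeomorphic_imp_homotopy_equivalent_space[OF realization_topped_outside_union_homeomorphic[OF U]])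
  also have "\<dots> homotopy_equivalent_space top_of_set (sphere 0 1 \<inter> {x. f x = 0})"
    using sphere_diff_separated_cones_homotopy_equivalent_kernel[OF assms(3) _ p assms(6) _ q assms(8-10)]
      union_of_fan_cones_scaleR assms(4,7) by blast
  also have "\<dots> homotopy_equivalent_space codim2_sphere TYPE('a)"
    using kernel_sphere_homeomorphic_codim2_sphere[OF assms(8), of p] p assms(9)
      homeomorphic_imp_homotopy_equivalent_space by fastforce
  finally show ?thesis unfolding nonzero_cones_def .
qed

end
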